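(* Let $m\ge 2$ and let $K\neq\Delta_{[m]}$ be a simplicial complex on $[m]$. Then $$\max\bigl(m-1,\ \chi(K),\ \chi(K^\vee)\bigr)\le \chi(\mathrm{Bier}(K))\le m.$$
   Context: A simplicial complex $K$ on $[m]=\{1,\dots,m\}$ is a nonempty family of subsets of $[m]$ closed under taking subsets. $V(K)=\{i:\{i\}\in K\}$ is its set of (geometric) vertices; elements $i\in[m]$ with $\{i\}\notin K$ are ghost vertices. $\Delta_{[m]}=2^{[m]}$. Let $[m']=\{1',\dots,m'\}$ be a disjoint copy of $[m]$ and for $I\subseteq[m]$ let $I'=\{i':i\in I\}$. For $K\ne\Delta_{[m]}$ the Alexander dual $K^\vee$ is the simplicial complex on $[m']$ with $J'\in K^\vee$ iff $[m]\setminus J\notin K$. The Bier sphere $\mathrm{Bier}(K)$ is the simplicial complex on $[m]\sqcup[m']$ whose faces are $I\sqcup J'$ with $I\in K$, $J'\in K^\vee$, $I\cap J=\varnothing$; it is a PL sphere of dimension $m-2$. The chromatic number $\chi(L)$ of a simplicial complex $L$ is the least number of colors in a map $c\colon V(L)\to C$ with $c(u)\ne c(v)$ whenever $\{u,v\}\in L$ (i.e. the chromatic number of the 1-skeleton). *)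

theory Defs
  imports Main
begin

definition simplicial_complex_on :: "nat \<Rightarrow> nat set set \<Rightarrow> bool" where
  "simplicial_complex_on m K \<longleftrightarrow>
     K \<noteq> {} \<and> (\<forall>F\<in>K. F \<subseteq> {1..m}) \<and> (\<forall>F\<in>K. \<forall>G. G \<subseteq> F \<longrightarrow> G \<in> K)"

definition full_simplex :: "nat \<Rightarrow> nat set set" where
  "full_simplex m = Pow {1..m}"

text \<open>Alexander dual, on the disjoint copy [m'] (encoded as Inr i for i').\<close>
definition alexander_dual :: "nat \<Rightarrow> nat set set \<Rightarrow> (nat + nat) set set" where
  "alexander_dual m K = {Inr ` J | J. J \<subseteq> {1..m} \<and> {1..m} - J \<notin> K}"

text \<open>Bier sphere on [m] \<squnion> [m'] (Inl i for i, Inr i for i').\<close>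
definition bier :: "nat \<Rightarrow> nat set set \<Rightarrow> (nat + nat) set set" where
  "bier m K = {Inl ` I \<union> Inr ` J | I J. I \<in> K \<and> Inr ` J \<in> alexander_dual m K \<and> I \<inter> J = {}}"

definition vertices :: "'a set set \<Rightarrow> 'a set" where
  "vertices L = {v. {v} \<in> L}"

definition proper_colouring :: "'a set set \<Rightarrow> nat \<Rightarrow> ('a \<Rightarrow> nat) \<Rightarrow> bool" where
  "proper_colouring L k c \<longleftrightarrow>
     (\<forall>v\<in>vertices L. c v < k) \<and> (\<forall>u v. u \<noteq> v \<and> {u, v} \<in> L \<longrightarrow> c u \<noteq> c v)"

definition chromatic_number :: "'a set set \<Rightarrow> nat" where
  "chromatic_number L = (LEAST k. \<exists>c. proper_colouring L k c)"

end

theory Submission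
  imports Defs
begin

text \<open>Colouring a vertex i or i' by i - 1 is proper on Bier(K), because a face I \<squnion> J' has
  I \<inter> J = {}; hence \<chi>(Bier(K)) \<le> m. Conversely K and its Alexander dual are subcomplexes
  of Bier(K), and if I is a maximal face of K and x \<notin> I, then I \<squnion> ([m] - I - {x})' is a
  face of Bier(K) with m - 1 vertices, all of which need distinct colours.\<close>

lemma chromatic_number_le:
  "proper_colouring L k c \<Longrightarrow> chromatic_number L \<le> k"
  unfolding chromatic_number_def by (rule Least_le) blast

lemma proper_colouring_chromatic_number:
  assumes "proper_colouring L k c"
  obtains c' where "proper_colouring L (chromatic_number L) c'"
proof -
  have "\<exists>c'. proper_colouring L (chromatic_number L) c'"
    unfolding chromatic_number_def by (rule LeastI_ex) (use assms in blast)
  then show thesis using that by blast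
qed

lemma proper_colouring_comp:
  assumes "proper_colouring L k c" "inj f" "\<And>F. F \<in> L' \<Longrightarrow> f ` F \<in> L"
  shows "proper_colouring L' k (c \<circ> f)"
proof -
  have "c (f v) < k" if "v \<in> vertices L'" for v
  proof -
    have "{f v} \<in> L" using assms(3)[of "{v}"] that by (simp add: vertices_def)
    then show ?thesis using assms(1) by (simp add: proper_colouring_def vertices_def)
  qed
  moreover have "c (f u) \<noteq> c (f v)" if "u \<noteq> v" "{u, v} \<in> L'" for u v
  proof -
    have "{f u, f v} \<in> L" using assms(3)[OF that(2)] by simp
    moreover have "f u \<noteq> f v" using that(1) assms(2) by (meson injD)
    ultimately show ?thesis using assms(1) by (simp add: proper_colouring_def)
  qed
  ultimately show ?thesis by (simp add: proper_colouring_def)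
qed

lemma chromatic_number_le_of_embedding:
  assumes "proper_colouring L k c" "inj f" "\<And>F. F \<in> L' \<Longrightarrow> f ` F \<in> L"
  shows "chromatic_number L' \<le> chromatic_number L"
proof -
  obtain c' where "proper_colouring L (chromatic_number L) c'"
    using proper_colouring_chromatic_number[OF assms(1)] .
  then show ?thesis by (rule chromatic_number_le[OF proper_colouring_comp[OF _ assms(2,3)]])
qed

lemma card_face_le_chromatic_number:
  assumes "proper_colouring L k c" "finite F" "\<And>G. G \<subseteq> F \<Longrightarrow> G \<in> L"
  shows "card F \<le> chromatic_number L"
proof -
  obtain c' where c': "proper_colouring L (chromatic_number L) c'"
    using proper_colouring_chromatic_number[OF assms(1)] .
  have "inj_on c' F"
    using c' assms(3)[of "{_, _}"] unfolding proper_colouring_def inj_on_def by blast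
  moreover have "c' ` F \<subseteq> {..<chromatic_number L}"
    using c' assms(3)[of "{_}"] by (auto simp: proper_colouring_def vertices_def)
  ultimately show ?thesis by (metis card_inj_on_le card_lessThan finite_lessThan)
qed

lemma proper_colouring_if_inj_on_faces:
  assumes "\<And>F. F \<in> L \<Longrightarrow> inj_on c F \<and> c ` F \<subseteq> {..<k}"
  shows "proper_colouring L k c"
  using assms unfolding proper_colouring_def vertices_def inj_on_def by blast

lemma alexander_dual_Inr_iff:
  "Inr ` J \<in> alexander_dual m K \<longleftrightarrow> J \<subseteq> {1..m} \<and> {1..m} - J \<notin> K"
  unfolding alexander_dual_def by (simp add: inj_image_eq_iff)

lemma full_face_not_in_complex:
  assumes "simplicial_complex_on m K" "K \<noteq> full_simplex m"
  shows "{1..m} \<notin> K"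
  using assms unfolding simplicial_complex_on_def full_simplex_def by blast

lemma bier_downward_closed:
  assumes sc: "simplicial_complex_on m K" and F: "F \<in> bier m K" and "G \<subseteq> F"
  shows "G \<in> bier m K"
proof -
  obtain I J where IJ: "F = Inl ` I \<union> Inr ` J" "I \<in> K" "J \<subseteq> {1..m}" "{1..m} - J \<notin> K"
    "I \<inter> J = {}"
    using F unfolding bier_def by (auto simp: alexander_dual_Inr_iff)
  define I' where "I' = {i. Inl i \<in> G}"
  define J' where "J' = {j. Inr j \<in> G}"
  have G: "G = Inl ` I' \<union> Inr ` J'"
  proof (rule set_eqI)
    fix v show "v \<in> G \<longleftrightarrow> v \<in> Inl ` I' \<union> Inr ` J'"
      unfolding I'_def J'_def by (cases v) auto
  qed
  have sub: "I' \<subseteq> I" "J' \<subseteq> J" using \<open>G \<subseteq> F\<close> IJ(1) unfolding I'_def J'_def by auto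
  have "I' \<in> K" using sc IJ(2) sub(1) by (simp add: simplicial_complex_on_def)
  moreover have "{1..m} - J' \<notin> K"
    using sc IJ(4) sub(2) unfolding simplicial_complex_on_def by (meson Diff_mono order_refl)
  then have "Inr ` J' \<in> alexander_dual m K"
    using sub(2) IJ(3) by (simp add: alexander_dual_Inr_iff)
  moreover have "I' \<inter> J' = {}" using IJ(5) sub by auto
  ultimately show ?thesis unfolding bier_def G by blast
qed

lemma Inl_image_in_bier:
  "F \<in> K \<Longrightarrow> {1..m} \<notin> K \<Longrightarrow> Inl ` F \<in> bier m K"
  using alexander_dual_Inr_iff[of "{}" m K] unfolding bier_def by force

lemma alexander_dual_subset_bier:
  assumes "simplicial_complex_on m K"
  shows "alexander_dual m K \<subseteq> bier m K"
proof
  fix F assume "F \<in> alexander_dual m K"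
  moreover have "{} \<in> K" using assms by (auto simp: simplicial_complex_on_def)
  ultimately show "F \<in> bier m K" unfolding alexander_dual_def bier_def by blast
qed

lemma bier_index_colouring:
  assumes "simplicial_complex_on m K"
  shows "proper_colouring (bier m K) m (\<lambda>v. case_sum id id v - 1)"
proof (rule proper_colouring_if_inj_on_faces)
  fix F assume "F \<in> bier m K"
  then obtain I J where IJ: "F = Inl ` I \<union> Inr ` J" "I \<subseteq> {1..m}" "J \<subseteq> {1..m}" "I \<inter> J = {}"
    using assms unfolding bier_def simplicial_complex_on_def by (auto simp: alexander_dual_Inr_iff)
  have index: "case_sum id id v \<in> {1..m}" if "v \<in> F" for v
    using that IJ by auto
  have "inj_on (case_sum id id) F"
    using IJ unfolding inj_on_def by (auto simp: disjoint_iff)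
  moreover have "inj_on (\<lambda>i::nat. i - 1) (case_sum id id ` F)"
  proof (rule inj_on_subset)
    show "inj_on (\<lambda>i::nat. i - 1) {1..m}" by (rule inj_onI) auto
    show "case_sum id id ` F \<subseteq> {1..m}" using index by blast
  qed
  ultimately have "inj_on (\<lambda>v. case_sum id id v - 1) F"
    using comp_inj_on[of "case_sum id id" F] by (simp add: o_def)
  moreover have "(\<lambda>v. case_sum id id v - 1) ` F \<subseteq> {..<m}"
    using index by fastforce
  ultimately show "inj_on (\<lambda>v. case_sum id id v - 1) F \<and> (\<lambda>v. case_sum id id v - 1) ` F \<subseteq> {..<m}"
    by blast
qed

lemma bier_face_card_m_minus_1:
  assumes sc: "simplicial_complex_on m K" and full: "{1..m} \<notin> K"
  obtains F where "F \<in> bier m K" "card F = m - 1"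
proof -
  have "finite K" using sc unfolding simplicial_complex_on_def
    by (meson Pow_iff finite_Pow_iff finite_atLeastAtMost finite_subset subsetI)
  moreover have "K \<noteq> {}" using sc by (simp add: simplicial_complex_on_def)
  ultimately obtain I where I: "I \<in> K" and maximal: "\<And>I'. I' \<in> K \<Longrightarrow> I \<subseteq> I' \<Longrightarrow> I' = I"
    using finite_has_maximal by metis
  have Im: "I \<subseteq> {1..m}" using sc I by (simp add: simplicial_complex_on_def)
  moreover have "I \<noteq> {1..m}" using full I by blast
  ultimately obtain x where x: "x \<in> {1..m}" "x \<notin> I" by blast
  define J where "J = {1..m} - I - {x}"
  have "I \<union> {x} \<notin> K" using maximal[of "I \<union> {x}"] x(2) by blast
  moreover have "{1..m} - J = I \<union> {x}" using Im x unfolding J_def by auto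
  moreover have "J \<subseteq> {1..m}" unfolding J_def by blast
  ultimately have "Inr ` J \<in> alexander_dual m K" by (simp add: alexander_dual_Inr_iff)
  then have "Inl ` I \<union> Inr ` J \<in> bier m K" using I unfolding bier_def J_def by blast
  moreover have "card (Inl ` I \<union> Inr ` J) = m - 1"
  proof -
    have "finite I" using Im finite_subset by blast
    then have "card (Inl ` I \<union> Inr ` J) = card I + card J"
      using card_Plus[of I J] by (simp add: Plus_def J_def)
    also have "\<dots> = card (I \<union> J)" using \<open>finite I\<close> by (rule card_Un_disjoint[symmetric]) (auto simp: J_def)
    also have "I \<union> J = {1..m} - {x}" using Im x unfolding J_def by auto
    finally show ?thesis using x(1) by simp
  qed
  ultimately show thesis using that by blast
qed

theorem mainTheorem1:
  fixes m :: nat and K :: "nat set set"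
  assumes "m \<ge> 2"
    and "simplicial_complex_on m K"
    and "K \<noteq> full_simplex m"
  shows "max (m - 1) (max (chromatic_number K) (chromatic_number (alexander_dual m K)))
           \<le> chromatic_number (bier m K)
         \<and> chromatic_number (bier m K) \<le> m"
proof -
  note sc = assms(2)
  have full: "{1..m} \<notin> K" using full_face_not_in_complex[OF sc assms(3)] .
  note colouring = bier_index_colouring[OF sc]
  have "chromatic_number K \<le> chromatic_number (bier m K)"
    by (rule chromatic_number_le_of_embedding[OF colouring inj_Inl Inl_image_in_bier[OF _ full]])
  moreover have "chromatic_number (alexander_dual m K) \<le> chromatic_number (bier m K)"
    using chromatic_number_le_of_embedding[OF colouring inj_on_id] alexander_dual_subset_bier[OF sc]
    by auto
  moreover have "m - 1 \<le> chromatic_number (bier m K)"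
  proof -
    obtain F where F: "F \<in> bier m K" "card F = m - 1"
      using bier_face_card_m_minus_1[OF sc full] .
    have "finite F" using F(2) assms(1) by (intro card_ge_0_finite) simp
    then show ?thesis
      using card_face_le_chromatic_number[OF colouring, of F] bier_downward_closed[OF sc F(1)] F(2)
      by simp
  qed
  moreover have "chromatic_number (bier m K) \<le> m" using chromatic_number_le[OF colouring] .
  ultimately show ?thesis by simp
qed

end
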